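(* In the static load balancing game described in the context, let $a$ be a pure Nash equilibrium and let $S(a)=\{j\in[m]: a_{ij}>0\text{ for some } i\in[n]\}$. Then the normalized loads on all servers in $S(a)$ are equal: $$L_j(a)=L:=\frac{\sum_{\ell\in S(a)}s_\ell^0+\sum_{i=1}^n\lambda_i}{\sum_{\ell\in S(a)}\mu_\ell}\qquad\text{for all } j\in S(a).$$
   Context: Static load balancing game: there are $m$ servers $[m]$ with service rates $\mu_j>0$ and initial loads $s_j^0\ge0$, and $n$ players $[n]$; player $i$ holds a job of length $\lambda_i>0$. Player $i$'s action set is $A_i=\{a_i=(a_{i1},\dots,a_{im}):\sum_j a_{ij}=1,\ a_{ij}\ge0\}$. The cost of player $i$ is $$D_i(a)=\sum_{j=1}^m \lambda_i a_{ij}\left(\frac{\lambda_i a_{ij}}{2\mu_j}+\frac{s_j^0+\sum_{k\neq i}\lambda_k a_{kj}}{\mu_j}\right).$$ A pure Nash equilibrium is a profile $a$ with $D_i(a_i,a_{-i})\le D_i(a_i',a_{-i})$ for all $i$, $a_i'\in A_i$. The normalized load on server $j$ under profile $a$ is $L_j(a)=\dfrac{s_j^0+\sum_{i=1}^n\lambda_ia_{ij}}{\mu_j}$. *)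

theory Defs
  imports "HOL-Analysis.Analysis"
begin

text \<open>Servers are indexed by 0..<m, players by 0..<n. A (pure) profile is
  a :: nat => nat => real with a i j the fraction of player i's job sent to server j.\<close>

definition action_set :: "nat \<Rightarrow> (nat \<Rightarrow> real) set" where
  "action_set m = {x. (\<Sum>j<m. x j) = 1 \<and> (\<forall>j<m. 0 \<le> x j)}"

definition profile :: "nat \<Rightarrow> nat \<Rightarrow> (nat \<Rightarrow> nat \<Rightarrow> real) \<Rightarrow> bool" where
  "profile n m a \<longleftrightarrow> (\<forall>i<n. a i \<in> action_set m)"

definition cost :: "nat \<Rightarrow> nat \<Rightarrow> (nat \<Rightarrow> real) \<Rightarrow> (nat \<Rightarrow> real) \<Rightarrow> (nat \<Rightarrow> real)
    \<Rightarrow> (nat \<Rightarrow> nat \<Rightarrow> real) \<Rightarrow> nat \<Rightarrow> real" where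
  "cost n m mu s0 lam a i =
     (\<Sum>j<m. lam i * a i j * (lam i * a i j / (2 * mu j)
        + (s0 j + (\<Sum>k\<in>{..<n} - {i}. lam k * a k j)) / mu j))"

definition nash_eq :: "nat \<Rightarrow> nat \<Rightarrow> (nat \<Rightarrow> real) \<Rightarrow> (nat \<Rightarrow> real) \<Rightarrow> (nat \<Rightarrow> real)
    \<Rightarrow> (nat \<Rightarrow> nat \<Rightarrow> real) \<Rightarrow> bool" where
  "nash_eq n m mu s0 lam a \<longleftrightarrow> profile n m a \<and>
     (\<forall>i<n. \<forall>x\<in>action_set m. cost n m mu s0 lam a i \<le> cost n m mu s0 lam (a(i := x)) i)"

definition load :: "nat \<Rightarrow> (nat \<Rightarrow> real) \<Rightarrow> (nat \<Rightarrow> real) \<Rightarrow> (nat \<Rightarrow> real)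
    \<Rightarrow> (nat \<Rightarrow> nat \<Rightarrow> real) \<Rightarrow> nat \<Rightarrow> real" where
  "load n mu s0 lam a j = (s0 j + (\<Sum>i<n. lam i * a i j)) / mu j"

definition support :: "nat \<Rightarrow> nat \<Rightarrow> (nat \<Rightarrow> nat \<Rightarrow> real) \<Rightarrow> nat set" where
  "support n m a = {j. j < m \<and> (\<exists>i<n. a i j > 0)}"

end

theory Submission
  imports Defs
begin

text \<open>A player i that sends a positive fraction of its job to server j may move an amount
  e of it to any other server k. This changes its cost by
  lam_i e (lam_i e (1/(2 mu_j) + 1/(2 mu_k)) - (L_j - L_k)), which is negative for small e > 0
  unless L_j \<le> L_k. So at an equilibrium all servers in the support carry the same load L,
  and as every job is placed entirely on the support, summing mu_j L over it determines L.\<close>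

lemma nonpos_if_quadratic_nonneg_near_zero:
  fixes a c d :: real
  assumes "a > 0" "c \<ge> 0" and nonneg: "\<And>e. 0 < e \<Longrightarrow> e \<le> a \<Longrightarrow> 0 \<le> e * (c * e - d)"
  shows "d \<le> 0"
proof (rule ccontr)
  assume "\<not> d \<le> 0"
  define e where "e = min a (d / (c + 1))"
  have "e > 0" "e \<le> a" using \<open>a > 0\<close> \<open>c \<ge> 0\<close> \<open>\<not> d \<le> 0\<close> by (auto simp: e_def)
  have "c * e \<le> c * (d / (c + 1))"
    using \<open>c \<ge> 0\<close> unfolding e_def by (intro mult_left_mono) auto
  also have "\<dots> < d" using \<open>c \<ge> 0\<close> \<open>\<not> d \<le> 0\<close> by (simp add: field_simps)
  finally have "e * (c * e - d) < 0" using \<open>e > 0\<close> by (simp add: mult_pos_neg)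
  with nonneg[OF \<open>e > 0\<close> \<open>e \<le> a\<close>] show False by simp
qed

lemma sum_eq_two_points:
  fixes h :: "'a \<Rightarrow> 'b::comm_monoid_add"
  assumes "finite A" "j \<in> A" "k \<in> A" "j \<noteq> k" "\<And>l. l \<in> A \<Longrightarrow> l \<noteq> j \<Longrightarrow> l \<noteq> k \<Longrightarrow> h l = 0"
  shows "sum h A = h j + h k"
proof -
  have "sum h A = sum h {j, k}"
    using assms by (intro sum.mono_neutral_right) auto
  with assms show ?thesis by simp
qed

definition shift :: "nat \<Rightarrow> nat \<Rightarrow> real \<Rightarrow> (nat \<Rightarrow> real) \<Rightarrow> nat \<Rightarrow> real" where
  "shift j k e x = x(j := x j - e, k := x k + e)"

lemma shift_in_action_set:
  assumes "x \<in> action_set m" "j < m" "k < m" "j \<noteq> k" "0 \<le> e" "e \<le> x j"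
  shows "shift j k e x \<in> action_set m"
proof -
  have "(\<Sum>q<m. shift j k e x q - x q) = (shift j k e x j - x j) + (shift j k e x k - x k)"
    using assms by (intro sum_eq_two_points) (auto simp: shift_def)
  then have "(\<Sum>q<m. shift j k e x q) = (\<Sum>q<m. x q)"
    using \<open>j \<noteq> k\<close> by (simp add: shift_def sum_subtractf)
  with assms show ?thesis by (auto simp: action_set_def shift_def)
qed

definition residual_load :: "nat \<Rightarrow> (nat \<Rightarrow> real) \<Rightarrow> (nat \<Rightarrow> real)
    \<Rightarrow> (nat \<Rightarrow> nat \<Rightarrow> real) \<Rightarrow> nat \<Rightarrow> nat \<Rightarrow> real" where
  "residual_load n s0 lam a i q = s0 q + (\<Sum>k\<in>{..<n} - {i}. lam k * a k q)"

lemma load_eq_residual_load: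
  assumes "i < n"
  shows "load n mu s0 lam a q = (residual_load n s0 lam a i q + lam i * a i q) / mu q"
proof -
  have "(\<Sum>k<n. lam k * a k q) = lam i * a i q + (\<Sum>k\<in>{..<n} - {i}. lam k * a k q)"
    using assms by (subst sum.remove[of _ i]) auto
  then show ?thesis by (simp add: load_def residual_load_def)
qed

lemma cost_fun_upd_self:
  "cost n m mu s0 lam (a(i := y)) i =
     (\<Sum>q<m. lam i * y q * (lam i * y q / (2 * mu q) + residual_load n s0 lam a i q / mu q))"
  unfolding cost_def residual_load_def by (intro sum.cong refl) (auto intro!: sum.cong)

lemma cost_shift:
  assumes "i < n" "j < m" "k < m" "j \<noteq> k" "mu j \<noteq> 0" "mu k \<noteq> 0"
  shows "cost n m mu s0 lam (a(i := shift j k e (a i))) i - cost n m mu s0 lam a i =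
     lam i * e * (lam i * e * (1 / (2 * mu j) + 1 / (2 * mu k))
       - (load n mu s0 lam a j - load n mu s0 lam a k))"
proof -
  define g where "g q t = lam i * t * (lam i * t / (2 * mu q) + residual_load n s0 lam a i q / mu q)"
    for q t
  define x where "x = shift j k e (a i)"
  have "cost n m mu s0 lam (a(i := x)) i - cost n m mu s0 lam (a(i := a i)) i
      = (\<Sum>q<m. g q (x q) - g q (a i q))"
    by (simp only: cost_fun_upd_self g_def sum_subtractf)
  also have "\<dots> = (g j (x j) - g j (a i j)) + (g k (x k) - g k (a i k))"
    using assms by (intro sum_eq_two_points) (auto simp: x_def shift_def)
  also have "\<dots> = lam i * e * (lam i * e * (1 / (2 * mu j) + 1 / (2 * mu k))
       - (load n mu s0 lam a j - load n mu s0 lam a k))"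
    using assms by (simp add: x_def shift_def g_def load_eq_residual_load field_simps)
  finally show ?thesis by (simp add: x_def)
qed

lemma nash_eq_load_le:
  assumes mu: "\<forall>j<m. mu j > 0" and lam: "\<forall>i<n. lam i > 0"
    and nash: "nash_eq n m mu s0 lam a"
    and "i < n" "j < m" "k < m" "a i j > 0"
  shows "load n mu s0 lam a j \<le> load n mu s0 lam a k"
proof (cases "j = k")
  case False
  define l where "l = lam i"
  define C where "C = 1 / (2 * mu j) + 1 / (2 * mu k)"
  define d where "d = load n mu s0 lam a j - load n mu s0 lam a k"
  have "l > 0" "mu j > 0" "mu k > 0"
    using assms by (auto simp: l_def)
  then have "C \<ge> 0" by (simp add: C_def)
  have "0 \<le> e * (l\<^sup>2 * C * e - l * d)" if "0 < e" "e \<le> a i j" for e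
  proof -
    have "a i \<in> action_set m" using nash \<open>i < n\<close> by (simp add: nash_eq_def profile_def)
    then have "shift j k e (a i) \<in> action_set m"
      using that False assms by (intro shift_in_action_set) auto
    with nash \<open>i < n\<close>
    have "0 \<le> cost n m mu s0 lam (a(i := shift j k e (a i))) i - cost n m mu s0 lam a i"
      by (simp add: nash_eq_def)
    also have "\<dots> = l * e * (l * e * C - d)"
      using False assms \<open>mu j > 0\<close> \<open>mu k > 0\<close>
      unfolding l_def C_def d_def by (intro cost_shift) auto
    also have "\<dots> = e * (l\<^sup>2 * C * e - l * d)"
      by (simp add: algebra_simps power2_eq_square)
    finally show ?thesis .
  qed
  then have "l * d \<le> 0"
    using \<open>a i j > 0\<close> \<open>l > 0\<close> \<open>C \<ge> 0\<close>
    by (intro nonpos_if_quadratic_nonneg_near_zero[of "a i j" "l\<^sup>2 * C"]) auto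
  with \<open>l > 0\<close> show ?thesis by (simp add: d_def mult_le_0_iff)
qed simp

lemma nash_eq_load_eq_on_support:
  assumes "\<forall>j<m. mu j > 0" "\<forall>i<n. lam i > 0" "nash_eq n m mu s0 lam a"
    and "j \<in> support n m a" "k \<in> support n m a"
  shows "load n mu s0 lam a j = load n mu s0 lam a k"
proof -
  obtain i i' where "i < n" "a i j > 0" "j < m" "i' < n" "a i' k > 0" "k < m"
    using assms(4,5) by (auto simp: support_def)
  with nash_eq_load_le[OF assms(1-3)] show ?thesis by (meson order_antisym)
qed

lemma action_sum_support:
  assumes "profile n m a" "i < n"
  shows "(\<Sum>q\<in>support n m a. a i q) = 1"
proof -
  have "(\<Sum>q\<in>support n m a. a i q) = (\<Sum>q<m. a i q)"
    using assms by (intro sum.mono_neutral_left)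
      (force simp: support_def profile_def action_set_def)+
  with assms show ?thesis by (simp add: profile_def action_set_def)
qed

lemma sum_weighted_load_support:
  assumes "\<forall>j<m. mu j \<noteq> 0" "profile n m a"
  shows "(\<Sum>q\<in>support n m a. mu q * load n mu s0 lam a q)
     = (\<Sum>q\<in>support n m a. s0 q) + (\<Sum>i<n. lam i)"
proof -
  let ?S = "support n m a"
  have "(\<Sum>q\<in>?S. mu q * load n mu s0 lam a q) = (\<Sum>q\<in>?S. s0 q + (\<Sum>i<n. lam i * a i q))"
    using assms by (intro sum.cong) (auto simp: load_def support_def)
  also have "\<dots> = (\<Sum>q\<in>?S. s0 q) + (\<Sum>i<n. lam i * (\<Sum>q\<in>?S. a i q))"
    by (simp add: sum.distrib sum.swap[of _ ?S] sum_distrib_left)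
  also have "\<dots> = (\<Sum>q\<in>?S. s0 q) + (\<Sum>i<n. lam i)"
    using assms by (simp add: action_sum_support)
  finally show ?thesis .
qed

theorem lemma3:
  fixes n m :: nat and mu s0 lam :: "nat \<Rightarrow> real" and a :: "nat \<Rightarrow> nat \<Rightarrow> real"
  assumes "\<forall>j<m. mu j > 0"
    and "\<forall>j<m. s0 j \<ge> 0"
    and "\<forall>i<n. lam i > 0"
    and "nash_eq n m mu s0 lam a"
  shows "\<forall>j\<in>support n m a. load n mu s0 lam a j =
           ((\<Sum>l\<in>support n m a. s0 l) + (\<Sum>i<n. lam i)) / (\<Sum>l\<in>support n m a. mu l)"
proof
  let ?S = "support n m a"
  fix j assume "j \<in> ?S"
  have "?S \<subseteq> {..<m}" by (auto simp: support_def)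
  then have "(\<Sum>l\<in>?S. mu l) > 0"
    using \<open>j \<in> ?S\<close> assms(1) by (intro sum_pos) (auto intro: finite_subset)
  have "(\<Sum>l\<in>?S. mu l) * load n mu s0 lam a j = (\<Sum>q\<in>?S. mu q * load n mu s0 lam a q)"
    using nash_eq_load_eq_on_support[OF assms(1,3,4) \<open>j \<in> ?S\<close>]
    by (simp add: sum_distrib_right)
  also have "\<dots> = (\<Sum>l\<in>?S. s0 l) + (\<Sum>i<n. lam i)"
    using assms(1,4) by (intro sum_weighted_load_support) (auto simp: nash_eq_def)
  finally show "load n mu s0 lam a j = ((\<Sum>l\<in>?S. s0 l) + (\<Sum>i<n. lam i)) / (\<Sum>l\<in>?S. mu l)"
    using \<open>(\<Sum>l\<in>?S. mu l) > 0\<close> by (simp add: field_simps)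
qed

end
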